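(* Let $G$ be a graph, $k$ a positive integer, and $V_1,\dots,V_t$ a partition of $V(G)$ into types as described in the context. If $G$ has a star coloring using at most $k$ colors, then the integer program $\mathrm{ILP}(G,k,V_1,\dots,V_t)$ described in the context has a feasible assignment.
   Context: All graphs are finite, simple, undirected and connected. A star coloring of $G$ with at most $k$ colors is a map $f:V(G)\to\{1,\dots,k\}$ with $f(u)\neq f(v)$ for every edge $uv$ such that every path on four vertices (not necessarily induced) receives at least three distinct colors. Two vertices $u,v$ have the same type if $N(u)\setminus\{v\}=N(v)\setminus\{u\}$; $V_1,\dots,V_t$ is a partition of $V(G)$ into nonempty sets in each of which all vertices pairwise have the same type. Then each $G[V_i]$ is a clique or an independent set; $V_i$ is called a clique type if $G[V_i]$ is complete and an independent type if $G[V_i]$ has no edges. For $i\neq j$, either every vertex of $V_i$ is adjacent to every vertex of $V_j$ (write $V_j\in adj(V_i)$) or there are no edges between them. For $A\subseteq[t]$ let $T_A=\{V_i: i\in A\}$. The program $\mathrm{ILP}(G,k,V_1,\dots,V_t)$ has one integer variable $n_A$ for every $A\subseteq[t]$ and the following constraints: (C0) $n_A=0$ (the variable is discarded) whenever $T_A$ contains two types $V_i,V_j$ with $V_j\in adj(V_i)$; (C1) $\sum_{A\subseteq[t]} n_A\le k$; (C2) for each clique type $V_i$: $\sum_{A: V_i\in T_A} n_A=|V_i|$; (C3) for each independent type $V_i$: $1\le \sum_{A:V_i\in T_A} n_A\le \min\{k,|V_i|\}$; (C4) for every four distinct types $V_{i_1},V_{i_2},V_{i_3},V_{i_4}$ with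 $V_{i_1},V_{i_3}\in adj(V_{i_2})$ and $V_{i_4}\in adj(V_{i_3})$: if $\sum_{A: V_{i_1},V_{i_3}\in T_A} n_A\ge 1$ then $\sum_{B: V_{i_2},V_{i_4}\in T_B} n_B=0$; (C5) for every three distinct types $V_{i_1},V_{i_2},V_{i_3}$ with $V_{i_1}$ an independent type and $V_{i_2},V_{i_3}\in adj(V_{i_1})$: if $\sum_{A:V_{i_1}\in T_A} n_A<|V_{i_1}|$ then $\sum_{B: V_{i_2},V_{i_3}\in T_B} n_B=0$; (C6) for every two distinct independent types $V_{i_1},V_{i_2}$ with $V_{i_1}\in adj(V_{i_2})$: if $\sum_{A:V_{i_1}\in T_A} n_A<|V_{i_1}|$ then $\sum_{B:V_{i_2}\in T_B} n_B=|V_{i_2}|$, and symmetrically with $i_1,i_2$ swapped; (C7) $n_A\ge 0$ for all $A\subseteq[t]$. A feasible assignment is an assignment of integer values to all $n_A$ satisfying (C0)–(C7). *)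

theory Defs
  imports Main
begin

definition simple_graph :: "'a set \<Rightarrow> ('a \<Rightarrow> 'a \<Rightarrow> bool) \<Rightarrow> bool" where
  "simple_graph V E \<longleftrightarrow> finite V \<and> V \<noteq> {} \<and>
     (\<forall>u v. E u v \<longrightarrow> u \<in> V \<and> v \<in> V) \<and>
     (\<forall>u v. E u v \<longrightarrow> E v u) \<and> (\<forall>v. \<not> E v v)"

definition connected_graph :: "'a set \<Rightarrow> ('a \<Rightarrow> 'a \<Rightarrow> bool) \<Rightarrow> bool" where
  "connected_graph V E \<longleftrightarrow> (\<forall>u\<in>V. \<forall>v\<in>V. E\<^sup>*\<^sup>* u v)"

definition nbhd :: "'a set \<Rightarrow> ('a \<Rightarrow> 'a \<Rightarrow> bool) \<Rightarrow> 'a \<Rightarrow> 'a set" where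
  "nbhd V E v = {u \<in> V. E v u}"

definition star_coloring :: "'a set \<Rightarrow> ('a \<Rightarrow> 'a \<Rightarrow> bool) \<Rightarrow> nat \<Rightarrow> ('a \<Rightarrow> nat) \<Rightarrow> bool" where
  "star_coloring V E k f \<longleftrightarrow>
     (\<forall>v\<in>V. f v \<in> {1..k}) \<and>
     (\<forall>u v. E u v \<longrightarrow> f u \<noteq> f v) \<and>
     (\<forall>a b c d. distinct [a, b, c, d] \<and> E a b \<and> E b c \<and> E c d \<longrightarrow>
        card {f a, f b, f c, f d} \<ge> 3)"

definition same_type :: "'a set \<Rightarrow> ('a \<Rightarrow> 'a \<Rightarrow> bool) \<Rightarrow> 'a \<Rightarrow> 'a \<Rightarrow> bool" where
  "same_type V E u v \<longleftrightarrow> nbhd V E u - {v} = nbhd V E v - {u}"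

definition type_partition :: "'a set \<Rightarrow> ('a \<Rightarrow> 'a \<Rightarrow> bool) \<Rightarrow> nat \<Rightarrow> (nat \<Rightarrow> 'a set) \<Rightarrow> bool" where
  "type_partition V E t Vs \<longleftrightarrow>
     (\<forall>i\<in>{1..t}. Vs i \<noteq> {}) \<and>
     (\<forall>i\<in>{1..t}. \<forall>j\<in>{1..t}. i \<noteq> j \<longrightarrow> Vs i \<inter> Vs j = {}) \<and>
     (\<Union>i\<in>{1..t}. Vs i) = V \<and>
     (\<forall>i\<in>{1..t}. \<forall>u\<in>Vs i. \<forall>v\<in>Vs i. same_type V E u v)"

definition clique_type :: "('a \<Rightarrow> 'a \<Rightarrow> bool) \<Rightarrow> (nat \<Rightarrow> 'a set) \<Rightarrow> nat \<Rightarrow> bool" where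
  "clique_type E Vs i \<longleftrightarrow> (\<forall>u\<in>Vs i. \<forall>v\<in>Vs i. u \<noteq> v \<longrightarrow> E u v)"

definition indep_type :: "('a \<Rightarrow> 'a \<Rightarrow> bool) \<Rightarrow> (nat \<Rightarrow> 'a set) \<Rightarrow> nat \<Rightarrow> bool" where
  "indep_type E Vs i \<longleftrightarrow> (\<forall>u\<in>Vs i. \<forall>v\<in>Vs i. \<not> E u v)"

text \<open>type_adj E Vs i j: V_j \<in> adj(V_i), i.e. i \<noteq> j and every vertex of V_i is
  adjacent to every vertex of V_j.\<close>
definition type_adj :: "('a \<Rightarrow> 'a \<Rightarrow> bool) \<Rightarrow> (nat \<Rightarrow> 'a set) \<Rightarrow> nat \<Rightarrow> nat \<Rightarrow> bool" where
  "type_adj E Vs i j \<longleftrightarrow> i \<noteq> j \<and> (\<forall>u\<in>Vs i. \<forall>v\<in>Vs j. E u v)"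

definition ssum :: "nat \<Rightarrow> (nat set \<Rightarrow> int) \<Rightarrow> nat set \<Rightarrow> int" where
  "ssum t n S = (\<Sum>A \<in> {A. A \<subseteq> {1..t} \<and> S \<subseteq> A}. n A)"

definition ILP_feasible_assignment ::
  "('a \<Rightarrow> 'a \<Rightarrow> bool) \<Rightarrow> nat \<Rightarrow> nat \<Rightarrow> (nat \<Rightarrow> 'a set) \<Rightarrow> (nat set \<Rightarrow> int) \<Rightarrow> bool" where
  "ILP_feasible_assignment E k t Vs n \<longleftrightarrow>
     \<comment> \<open>C0\<close>
     (\<forall>A. A \<subseteq> {1..t} \<longrightarrow> (\<exists>i\<in>A. \<exists>j\<in>A. type_adj E Vs i j) \<longrightarrow> n A = 0) \<and>
     \<comment> \<open>C1\<close>
     (\<Sum>A \<in> Pow {1..t}. n A) \<le> int k \<and>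
     \<comment> \<open>C2\<close>
     (\<forall>i\<in>{1..t}. clique_type E Vs i \<longrightarrow> ssum t n {i} = int (card (Vs i))) \<and>
     \<comment> \<open>C3\<close>
     (\<forall>i\<in>{1..t}. indep_type E Vs i \<longrightarrow>
        1 \<le> ssum t n {i} \<and> ssum t n {i} \<le> min (int k) (int (card (Vs i)))) \<and>
     \<comment> \<open>C4\<close>
     (\<forall>i1\<in>{1..t}. \<forall>i2\<in>{1..t}. \<forall>i3\<in>{1..t}. \<forall>i4\<in>{1..t}.
        distinct [i1, i2, i3, i4] \<and> type_adj E Vs i2 i1 \<and> type_adj E Vs i2 i3 \<and>
        type_adj E Vs i3 i4 \<longrightarrow>
        ssum t n {i1, i3} \<ge> 1 \<longrightarrow> ssum t n {i2, i4} = 0) \<and>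
     \<comment> \<open>C5\<close>
     (\<forall>i1\<in>{1..t}. \<forall>i2\<in>{1..t}. \<forall>i3\<in>{1..t}.
        distinct [i1, i2, i3] \<and> indep_type E Vs i1 \<and> type_adj E Vs i1 i2 \<and>
        type_adj E Vs i1 i3 \<longrightarrow>
        ssum t n {i1} < int (card (Vs i1)) \<longrightarrow> ssum t n {i2, i3} = 0) \<and>
     \<comment> \<open>C6 (both orientations, as i1 i2 range over all ordered pairs)\<close>
     (\<forall>i1\<in>{1..t}. \<forall>i2\<in>{1..t}.
        i1 \<noteq> i2 \<and> indep_type E Vs i1 \<and> indep_type E Vs i2 \<and> type_adj E Vs i2 i1 \<longrightarrow>
        ssum t n {i1} < int (card (Vs i1)) \<longrightarrow> ssum t n {i2} = int (card (Vs i2))) \<and>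
     \<comment> \<open>C7\<close>
     (\<forall>A. A \<subseteq> {1..t} \<longrightarrow> n A \<ge> 0)"

definition ILP_feasible :: "('a \<Rightarrow> 'a \<Rightarrow> bool) \<Rightarrow> nat \<Rightarrow> nat \<Rightarrow> (nat \<Rightarrow> 'a set) \<Rightarrow> bool" where
  "ILP_feasible E k t Vs \<longleftrightarrow> (\<exists>n. ILP_feasible_assignment E k t Vs n)"

end

theory Submission
  imports Defs
begin

text \<open>Given a star colouring f, let \<open>n\<^sub>A\<close> be the number of colours c whose colour class
  meets exactly the types indexed by A. Then the sum of \<open>n\<^sub>A\<close> over all \<open>A \<supseteq> S\<close> counts the
  colours used on every type in S; in particular it is \<open>|f(V\<^sub>i)|\<close> for \<open>S = {i}\<close> and
  \<open>|f(V\<^sub>i) \<inter> f(V\<^sub>j)|\<close> for \<open>S = {i, j}\<close>. Properness gives (C0) and (C2), counting gives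
  (C1), (C3) and (C7), and each of (C4)-(C6) fails only if two types share a colour, or a
  type repeats one, in a way that produces a path on four vertices coloured with two
  colours.\<close>

lemma ssum_card_supersets:
  fixes AC :: "'c \<Rightarrow> nat set"
  assumes "finite C" and "\<And>c. AC c \<subseteq> {1..t}"
  shows "ssum t (\<lambda>A. int (card {c\<in>C. AC c = A})) S = int (card {c\<in>C. S \<subseteq> AC c})"
proof -
  let ?T = "{A. A \<subseteq> {1..t} \<and> S \<subseteq> A}"
  let ?B = "{c\<in>C. S \<subseteq> AC c}"
  have "finite ?T" by (rule finite_subset[of _ "Pow {1..t}"]) auto
  have "ssum t (\<lambda>A. int (card {c\<in>C. AC c = A})) S = int (\<Sum>A\<in>?T. card {c\<in>C. AC c = A})"
    unfolding ssum_def by simp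
  also have "(\<Sum>A\<in>?T. card {c\<in>C. AC c = A}) = (\<Sum>A\<in>?T. \<Sum>c\<in>{c\<in>?B. AC c = A}. (1::nat))"
  proof (rule sum.cong)
    fix A assume "A \<in> ?T"
    then have "{c\<in>C. AC c = A} = {c\<in>?B. AC c = A}" by auto
    then show "card {c\<in>C. AC c = A} = (\<Sum>c\<in>{c\<in>?B. AC c = A}. (1::nat))" by simp
  qed simp
  also have "\<dots> = (\<Sum>c\<in>?B. (1::nat))"
    by (rule sum.group) (use \<open>finite ?T\<close> assms in auto)
  finally show ?thesis by simp
qed

lemma star_coloring_no_bicoloured_P4:
  assumes "star_coloring V E k f" and "distinct [a, b, c, d]"
    and "E a b" "E b c" "E c d" and "f a = f c" "f b = f d"
  shows False
proof -
  have "card {f a, f b, f c, f d} \<ge> 3"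
    using assms(1-5) unfolding star_coloring_def by blast
  moreover have "card {f a, f b, f c, f d} \<le> 2"
    using assms(6,7) by (simp add: card_insert_if)
  ultimately show False by simp
qed

locale star_coloured_type_partition =
  fixes V :: "'a set" and E :: "'a \<Rightarrow> 'a \<Rightarrow> bool" and k t :: nat
    and Vs :: "nat \<Rightarrow> 'a set" and f :: "'a \<Rightarrow> nat"
  assumes graph: "simple_graph V E"
    and partition: "type_partition V E t Vs"
    and colouring: "star_coloring V E k f"
begin

definition types_of_colour :: "nat \<Rightarrow> nat set" where
  "types_of_colour c = {i\<in>{1..t}. c \<in> f ` Vs i}"

definition colour_assignment :: "nat set \<Rightarrow> int" where
  "colour_assignment A = int (card {c\<in>{1..k}. types_of_colour c = A})"

lemma type_nonempty: "i \<in> {1..t} \<Longrightarrow> Vs i \<noteq> {}"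
  using partition unfolding type_partition_def by blast

lemma type_finite: "i \<in> {1..t} \<Longrightarrow> finite (Vs i)"
  using partition graph unfolding type_partition_def simple_graph_def
  by (meson UN_I finite_subset subsetI)

lemma colours_of_type: "i \<in> {1..t} \<Longrightarrow> f ` Vs i \<subseteq> {1..k}"
  using partition colouring unfolding type_partition_def star_coloring_def by blast

lemma distinct_types_disjoint: "i \<in> {1..t} \<Longrightarrow> j \<in> {1..t} \<Longrightarrow> i \<noteq> j \<Longrightarrow> Vs i \<inter> Vs j = {}"
  using partition unfolding type_partition_def by blast

lemma type_adj_edges:
  assumes "type_adj E Vs i j" "u \<in> Vs i" "v \<in> Vs j"
  shows "E u v" "E v u"
  using assms graph unfolding type_adj_def simple_graph_def by blast+

lemma colouring_proper: "E u v \<Longrightarrow> f u \<noteq> f v"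
  using colouring unfolding star_coloring_def by blast

lemma ssum_colour_assignment:
  "ssum t colour_assignment S = int (card {c\<in>{1..k}. S \<subseteq> types_of_colour c})"
  unfolding colour_assignment_def
  by (rule ssum_card_supersets) (auto simp: types_of_colour_def)

lemma ssum_singleton:
  assumes "i \<in> {1..t}"
  shows "ssum t colour_assignment {i} = int (card (f ` Vs i))"
proof -
  have "{c\<in>{1..k}. {i} \<subseteq> types_of_colour c} = f ` Vs i"
    using assms colours_of_type[OF assms] unfolding types_of_colour_def by blast
  then show ?thesis by (simp only: ssum_colour_assignment)
qed

lemma ssum_pair:
  assumes "i \<in> {1..t}" "j \<in> {1..t}"
  shows "ssum t colour_assignment {i, j} = int (card (f ` Vs i \<inter> f ` Vs j))"
proof -
  have "{c\<in>{1..k}. {i, j} \<subseteq> types_of_colour c} = f ` Vs i \<inter> f ` Vs j"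
    using assms colours_of_type[OF assms(1)] unfolding types_of_colour_def by blast
  then show ?thesis by (simp only: ssum_colour_assignment)
qed

lemma shared_colour:
  assumes "i \<in> {1..t}" "j \<in> {1..t}" "ssum t colour_assignment {i, j} \<noteq> 0"
  obtains u v where "u \<in> Vs i" "v \<in> Vs j" "f u = f v"
proof -
  have "card (f ` Vs i \<inter> f ` Vs j) \<noteq> 0"
    using assms(3) ssum_pair[OF assms(1,2)] by simp
  then obtain c where "c \<in> f ` Vs i" "c \<in> f ` Vs j"
    by (metis card.empty disjoint_iff)
  then show thesis
    using that by blast
qed

lemma repeated_colour:
  assumes "i \<in> {1..t}" "ssum t colour_assignment {i} < int (card (Vs i))"
  obtains u w where "u \<in> Vs i" "w \<in> Vs i" "u \<noteq> w" "f u = f w"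
proof -
  have "card (f ` Vs i) \<noteq> card (Vs i)"
    using assms(2) ssum_singleton[OF assms(1)] by simp
  then have "\<not> inj_on f (Vs i)"
    using card_image by blast
  then show thesis
    using that unfolding inj_on_def by blast
qed

lemma ssum_singleton_le_card:
  assumes "i \<in> {1..t}"
  shows "ssum t colour_assignment {i} \<le> int (card (Vs i))"
  using ssum_singleton[OF assms] card_image_le[OF type_finite[OF assms], of f] by simp

lemma colour_assignment_nonneg: "A \<subseteq> {1..t} \<Longrightarrow> colour_assignment A \<ge> 0"
  unfolding colour_assignment_def by simp

lemma vanishes_on_adjacent_types:
  assumes "i \<in> A" "j \<in> A" "type_adj E Vs i j"
  shows "colour_assignment A = 0"
proof -
  have "types_of_colour c \<noteq> A" for c
  proof
    assume "types_of_colour c = A"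
    then obtain u v where "u \<in> Vs i" "v \<in> Vs j" "f u = c" "f v = c"
      using assms unfolding types_of_colour_def by force
    then show False using colouring_proper type_adj_edges assms(3) by metis
  qed
  then show ?thesis unfolding colour_assignment_def by simp
qed

lemma colour_assignment_sum_le: "(\<Sum>A \<in> Pow {1..t}. colour_assignment A) \<le> int k"
proof -
  have "(\<Sum>A \<in> Pow {1..t}. colour_assignment A) = ssum t colour_assignment {}"
    unfolding ssum_def by (rule sum.cong) auto
  also have "\<dots> = int (card {1..k})"
    unfolding ssum_colour_assignment by (rule arg_cong[where f = "\<lambda>X. int (card X)"]) auto
  also have "\<dots> = int k" by simp
  finally show ?thesis by simp
qed

lemma clique_type_ssum:
  assumes "i \<in> {1..t}" "clique_type E Vs i"
  shows "ssum t colour_assignment {i} = int (card (Vs i))"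
proof -
  have "inj_on f (Vs i)"
    using assms(2) colouring_proper unfolding clique_type_def inj_on_def by blast
  then show ?thesis using ssum_singleton[OF assms(1)] card_image by simp
qed

lemma ssum_singleton_bounds:
  assumes "i \<in> {1..t}"
  shows "1 \<le> ssum t colour_assignment {i} \<and>
    ssum t colour_assignment {i} \<le> min (int k) (int (card (Vs i)))"
proof -
  have "f ` Vs i \<noteq> {}" "finite (f ` Vs i)"
    using type_nonempty[OF assms] type_finite[OF assms] by auto
  then have "card (f ` Vs i) \<ge> 1"
    by (simp add: Suc_le_eq card_gt_0_iff)
  moreover have "card (f ` Vs i) \<le> card {1..k}"
    by (rule card_mono[OF _ colours_of_type[OF assms]]) simp
  ultimately show ?thesis
    using ssum_singleton[OF assms] ssum_singleton_le_card[OF assms] by simp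
qed

lemma no_shared_colours_P4:
  assumes "i1 \<in> {1..t}" "i2 \<in> {1..t}" "i3 \<in> {1..t}" "i4 \<in> {1..t}"
    and "distinct [i1, i2, i3, i4]"
    and "type_adj E Vs i2 i1" "type_adj E Vs i2 i3" "type_adj E Vs i3 i4"
    and "ssum t colour_assignment {i1, i3} \<ge> 1"
  shows "ssum t colour_assignment {i2, i4} = 0"
proof (rule ccontr)
  assume "ssum t colour_assignment {i2, i4} \<noteq> 0"
  then obtain b d where bd: "b \<in> Vs i2" "d \<in> Vs i4" "f b = f d"
    by (rule shared_colour[OF assms(2,4)])
  from assms(9) have "ssum t colour_assignment {i1, i3} \<noteq> 0" by simp
  then obtain a c where ac: "a \<in> Vs i1" "c \<in> Vs i3" "f a = f c"
    by (rule shared_colour[OF assms(1,3)])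
  have "distinct [a, b, c, d]"
    using assms(1-5) ac bd distinct_types_disjoint by auto
  moreover have "E a b" "E b c" "E c d"
    using assms(6-8) ac bd type_adj_edges by blast+
  ultimately show False
    using star_coloring_no_bicoloured_P4[OF colouring] ac bd by blast
qed

lemma repeated_colour_excludes_shared_neighbour_colour:
  assumes "i1 \<in> {1..t}" "i2 \<in> {1..t}" "i3 \<in> {1..t}" "distinct [i1, i2, i3]"
    and "type_adj E Vs i1 i2" "type_adj E Vs i1 i3"
    and "ssum t colour_assignment {i1} < int (card (Vs i1))"
  shows "ssum t colour_assignment {i2, i3} = 0"
proof (rule ccontr)
  assume "ssum t colour_assignment {i2, i3} \<noteq> 0"
  then obtain b d where bd: "b \<in> Vs i2" "d \<in> Vs i3" "f b = f d"
    by (rule shared_colour[OF assms(2,3)])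
  obtain u w where uw: "u \<in> Vs i1" "w \<in> Vs i1" "u \<noteq> w" "f u = f w"
    by (rule repeated_colour[OF assms(1,7)])
  have "distinct [u, b, w, d]"
    using assms(1-4) uw bd distinct_types_disjoint by auto
  moreover have "E u b" "E b w" "E w d"
    using assms(5,6) uw bd type_adj_edges by blast+
  ultimately show False
    using star_coloring_no_bicoloured_P4[OF colouring] uw bd by blast
qed

lemma repeated_colour_forces_injective_neighbour:
  assumes "i1 \<in> {1..t}" "i2 \<in> {1..t}" "i1 \<noteq> i2" "type_adj E Vs i2 i1"
    and "ssum t colour_assignment {i1} < int (card (Vs i1))"
  shows "ssum t colour_assignment {i2} = int (card (Vs i2))"
proof (rule ccontr)
  assume "ssum t colour_assignment {i2} \<noteq> int (card (Vs i2))"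
  then have "ssum t colour_assignment {i2} < int (card (Vs i2))"
    using ssum_singleton_le_card[OF assms(2)] by simp
  then obtain x y where xy: "x \<in> Vs i2" "y \<in> Vs i2" "x \<noteq> y" "f x = f y"
    by (rule repeated_colour[OF assms(2)])
  obtain u w where uw: "u \<in> Vs i1" "w \<in> Vs i1" "u \<noteq> w" "f u = f w"
    by (rule repeated_colour[OF assms(1,5)])
  have "distinct [u, x, w, y]"
    using assms(1-3) uw xy distinct_types_disjoint by auto
  moreover have "E u x" "E x w" "E w y"
    using assms(4) uw xy type_adj_edges by blast+
  ultimately show False
    using star_coloring_no_bicoloured_P4[OF colouring] uw xy by blast
qed

lemma feasible_assignment: "ILP_feasible_assignment E k t Vs colour_assignment"
  unfolding ILP_feasible_assignment_def
proof (intro conjI ballI allI impI)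
  show "colour_assignment A = 0" if "\<exists>i\<in>A. \<exists>j\<in>A. type_adj E Vs i j" for A
    using that vanishes_on_adjacent_types by blast
next
  show "ssum t colour_assignment {i2, i4} = 0"
    if "i1 \<in> {1..t}" "i2 \<in> {1..t}" "i3 \<in> {1..t}" "i4 \<in> {1..t}"
      and "distinct [i1, i2, i3, i4] \<and> type_adj E Vs i2 i1 \<and> type_adj E Vs i2 i3 \<and>
        type_adj E Vs i3 i4"
      and "ssum t colour_assignment {i1, i3} \<ge> 1" for i1 i2 i3 i4
    using that no_shared_colours_P4 by blast
next
  show "ssum t colour_assignment {i2, i3} = 0"
    if "i1 \<in> {1..t}" "i2 \<in> {1..t}" "i3 \<in> {1..t}"
      and "distinct [i1, i2, i3] \<and> indep_type E Vs i1 \<and> type_adj E Vs i1 i2 \<and>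
        type_adj E Vs i1 i3"
      and "ssum t colour_assignment {i1} < int (card (Vs i1))" for i1 i2 i3
    using that repeated_colour_excludes_shared_neighbour_colour by blast
next
  show "ssum t colour_assignment {i2} = int (card (Vs i2))"
    if "i1 \<in> {1..t}" "i2 \<in> {1..t}"
      and "i1 \<noteq> i2 \<and> indep_type E Vs i1 \<and> indep_type E Vs i2 \<and> type_adj E Vs i2 i1"
      and "ssum t colour_assignment {i1} < int (card (Vs i1))" for i1 i2
    using that repeated_colour_forces_injective_neighbour by blast
qed (use colour_assignment_sum_le clique_type_ssum ssum_singleton_bounds
    colour_assignment_nonneg in blast)+

end

theorem lemma2:
  fixes V :: "'a set" and E :: "'a \<Rightarrow> 'a \<Rightarrow> bool" and k t :: nat and Vs :: "nat \<Rightarrow> 'a set"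
  assumes "simple_graph V E"
    and "connected_graph V E"
    and "k \<ge> 1"
    and "type_partition V E t Vs"
    and "\<exists>f. star_coloring V E k f"
  shows "ILP_feasible E k t Vs"
proof -
  obtain f where "star_coloring V E k f" using assms(5) by blast
  then interpret star_coloured_type_partition V E k t Vs f
    using assms(1,4) by unfold_locales
  show ?thesis unfolding ILP_feasible_def using feasible_assignment by blast
qed

end
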